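(* Let $X\subset[-1,1]^n$ and $U\subset[-1,1]^m$ be compact sets with $0\in\mathrm{Int}(X)$ and $0\in\mathrm{Int}(U)$, and let $r:=1/\sup\{s>0: [-s,s]^{n+m}\subset X\times U\}$. Then for every $d\ge 0$ and every $p\in\mathbb{R}[x,u]_d$, $$\|p\|_{\mathbb{R}[x,u]}\le 3^{d+1}r^d\,\|p\|_{C(X\times U)}.$$
   Context: $\mathbb{R}[x,u]_d$ is the space of real polynomials in $(x,u)\in\mathbb{R}^{n+m}$ of total degree at most $d$. For $p=\sum_{|\alpha|\le d}\beta_\alpha (x,u)^\alpha$ with $\alpha\in\mathbb{N}^{n+m}$, $\|p\|_{\mathbb{R}[x,u]}:=\max_\alpha|\beta_\alpha|/\binom{|\alpha|}{\alpha}$, where $\binom{|\alpha|}{\alpha}=\frac{|\alpha|!}{\alpha_1!\cdots\alpha_{n+m}!}$. $\|p\|_{C(S)}=\max_{s\in S}|p(s)|$. *)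

theory Defs
  imports "HOL-Analysis.Analysis"
begin

text \<open>A polynomial of degree at most d is given by its coefficient function on multi-indices
of total degree at most d (coefficients elsewhere are ignored).\<close>

definition mdeg :: "('i::finite \<Rightarrow> nat) \<Rightarrow> nat" where
  "mdeg a = (\<Sum>i\<in>UNIV. a i)"

definition monomials_upto :: "nat \<Rightarrow> (('n::finite \<Rightarrow> nat) \<times> ('m::finite \<Rightarrow> nat)) set" where
  "monomials_upto d = {(a, b). mdeg a + mdeg b \<le> d}"

definition multinom :: "('n::finite \<Rightarrow> nat) \<Rightarrow> ('m::finite \<Rightarrow> nat) \<Rightarrow> real" where
  "multinom a b = fact (mdeg a + mdeg b) / ((\<Prod>i\<in>UNIV. fact (a i)) * (\<Prod>j\<in>UNIV. fact (b j)))"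

definition peval :: "nat \<Rightarrow> (('n::finite \<Rightarrow> nat) \<times> ('m::finite \<Rightarrow> nat) \<Rightarrow> real)
    \<Rightarrow> real^'n \<Rightarrow> real^'m \<Rightarrow> real" where
  "peval d c x u = (\<Sum>(a, b)\<in>monomials_upto d. c (a, b) * (\<Prod>i\<in>UNIV. (x $ i) ^ a i) * (\<Prod>j\<in>UNIV. (u $ j) ^ b j))"

definition coeff_norm :: "nat \<Rightarrow> (('n::finite \<Rightarrow> nat) \<times> ('m::finite \<Rightarrow> nat) \<Rightarrow> real) \<Rightarrow> real" where
  "coeff_norm d c = Max ((\<lambda>(a, b). \<bar>c (a, b)\<bar> / multinom a b) ` monomials_upto d)"

definition sup_norm :: "nat \<Rightarrow> (('n::finite \<Rightarrow> nat) \<times> ('m::finite \<Rightarrow> nat) \<Rightarrow> real)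
    \<Rightarrow> ((real^'n) \<times> (real^'m)) set \<Rightarrow> real" where
  "sup_norm d c S = (SUP z\<in>S. \<bar>peval d c (fst z) (snd z)\<bar>)"

definition cube_radius :: "(real^'n::finite) set \<Rightarrow> (real^'m::finite) set \<Rightarrow> real" where
  "cube_radius X U = Sup {s. s > 0 \<and>
      {(x, u). (\<forall>i. \<bar>x $ i\<bar> \<le> s) \<and> (\<forall>j. \<bar>u $ j\<bar> \<le> s)} \<subseteq> X \<times> U}"

end

theory Submission
  imports Defs "HOL-Complex_Analysis.Complex_Analysis"
begin

text \<open>Substituting \<open>(x, u) = t y\<close> turns \<open>p\<close> into a polynomial of degree at most \<open>d\<close> in \<open>y\<close>
that is bounded by \<open>M = \<parallel>p\<parallel>\<^sub>C\<^sub>(\<^sub>X\<^sub>\<times>\<^sub>U\<^sub>)\<close> on the unit cube whenever \<open>[-t, t]\<^sup>n\<^sup>+\<^sup>m \<subseteq> X \<times> U\<close>.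
Such a polynomial is bounded by \<open>3\<^sup>d M\<close> on the product of Bernstein ellipses
\<open>E\<^sub>3 = {z. \<bar>z - 1\<bar> + \<bar>z + 1\<bar> \<le> 3 + 1/3}\<close>: on the distinguished boundary, the Joukowski substitution
\<open>z\<^sub>k = (w\<^sub>k + w\<^sub>k\<^sup>-\<^sup>1)/2\<close> with \<open>\<bar>w\<^sub>k\<bar> = 3\<close> and homogenisation reduce this to the one-variable
maximum modulus principle, and the maximum modulus principle in each variable carries the bound
inside. As \<open>E\<^sub>3\<close> contains the closed unit disc, Cauchy's estimates on the unit torus bound every
coefficient of the rescaled polynomial by \<open>3\<^sup>d M\<close>. The multinomial weights are at least \<open>1\<close>,
and letting \<open>t\<close> tend to the cube radius \<open>1/r\<close> gives the claim, even with \<open>3\<^sup>d\<close> in place of \<open>3\<^sup>d\<^sup>+\<^sup>1\<close>.\<close>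

definition mpoly_eval :: "('k::finite \<Rightarrow> nat) set \<Rightarrow> (('k \<Rightarrow> nat) \<Rightarrow> 'a) \<Rightarrow> ('k \<Rightarrow> 'a) \<Rightarrow> 'a::comm_semiring_1"
  where "mpoly_eval A g y = (\<Sum>\<alpha>\<in>A. g \<alpha> * (\<Prod>k\<in>UNIV. y k ^ \<alpha> k))"

lemma mpoly_eval_of_real:
  "mpoly_eval A (\<lambda>\<alpha>. of_real (g \<alpha>)) (\<lambda>k. of_real (x k))
     = (of_real (mpoly_eval A g x) :: 'a::{real_algebra_1,comm_semiring_1})"
  by (simp add: mpoly_eval_def)

lemma mpoly_eval_holomorphic_in_var: "(\<lambda>\<zeta>. mpoly_eval A g (Z(j := \<zeta>))) holomorphic_on S"
proof -
  have "(\<lambda>\<zeta>. (Z(j := \<zeta>)) k) holomorphic_on S" for k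
    by (cases "k = j") auto
  then show ?thesis unfolding mpoly_eval_def by (intro holomorphic_intros)
qed

lemma sum_roots_of_unity_eq_0:
  fixes K :: nat and m :: int
  assumes "\<bar>m\<bar> < int K" and "m \<noteq> 0"
  shows "(\<Sum>l<K. exp (2 * of_real pi * \<i> * of_int m / of_nat K) ^ l) = 0"
proof -
  define \<zeta> where "\<zeta> = exp (2 * of_real pi * \<i> * of_int m / of_nat K)"
  have K: "K > 0" using assms by linarith
  have "\<zeta> ^ K = exp (of_nat K * (2 * of_real pi * \<i> * of_int m / of_nat K))"
    unfolding \<zeta>_def by (rule exp_of_nat_mult[symmetric])
  also have "\<dots> = 1"
    using K by (simp add: exp_eq_1)
  finally have "\<zeta> ^ K = 1" .
  moreover have "\<zeta> \<noteq> 1"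
  proof
    assume "\<zeta> = 1"
    then obtain n :: int where "2 * pi * m / K = of_int (2 * n) * pi"
      unfolding \<zeta>_def exp_eq_1 by (auto simp: Im_divide_of_nat)
    then have "m = n * int K"
      using K by (simp add: field_simps) (metis of_int_eq_iff of_int_mult of_int_of_nat_eq)
    with assms show False
      by (cases "n = 0") (auto simp: abs_mult)
  qed
  ultimately show ?thesis
    unfolding \<zeta>_def[symmetric] by (simp add: geometric_sum)
qed

lemma coeff_le_sup_on_torus:
  fixes g :: "('k::finite \<Rightarrow> nat) \<Rightarrow> complex"
  assumes "finite A" and deg: "\<forall>\<alpha>\<in>A. \<forall>k. \<alpha> k \<le> d" and "\<alpha>0 \<in> A"
    and bound: "\<And>Z. (\<forall>k. cmod (Z k) = 1) \<Longrightarrow> cmod (mpoly_eval A g Z) \<le> B"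
  shows "cmod (g \<alpha>0) \<le> B"
proof -
  define K where "K = Suc d"
  define e where "e = (\<lambda>x::int. exp (2 * of_real pi * \<i> * of_int x / of_nat K))"
  define T where "T = PiE (UNIV::'k set) (\<lambda>_. {..<K})"
  have e_pow: "e x ^ l = e (int l * x)" for x l
    unfolding e_def exp_of_nat_mult[symmetric] by (simp add: algebra_simps)
  have e_mult: "e x * e y = e (x + y)" for x y
    unfolding e_def by (simp add: exp_add[symmetric] add_divide_distrib distrib_left)
  have e_zero: "e 0 = 1"
    by (simp add: e_def)
  have e_norm: "cmod (e x) = 1" for x
    unfolding e_def by (simp add: norm_exp_eq_Re)
  have e_shift: "e (int l) ^ a * e (- (int l * int b)) = e (int a - int b) ^ l" for l a b
    by (simp add: e_pow e_mult algebra_simps)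
  have root_sum: "(\<Sum>j<K. e (int (\<alpha> k) - int (\<alpha>0 k)) ^ j) = (if \<alpha> k = \<alpha>0 k then of_nat K else 0)"
    if "\<alpha> \<in> A" for \<alpha> k
  proof -
    have "\<alpha> k \<le> d" "\<alpha>0 k \<le> d"
      using deg that \<open>\<alpha>0 \<in> A\<close> by auto
    then have "\<bar>int (\<alpha> k) - int (\<alpha>0 k)\<bar> < int K"
      by (simp add: K_def)
    with sum_roots_of_unity_eq_0[OF this] show ?thesis
      unfolding e_def by auto
  qed
  \<comment> \<open>Averaging \<open>Q(Z) Z\<^sup>-\<^sup>\<alpha>\<^sup>0\<close> over the grid of \<open>K\<close>-th roots of unity kills every other monomial.\<close>
  have "(\<Sum>l\<in>T. mpoly_eval A g (\<lambda>k. e (int (l k))) * (\<Prod>k\<in>UNIV. e (- int (l k * \<alpha>0 k))))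
      = (\<Sum>\<alpha>\<in>A. g \<alpha> * (\<Sum>l\<in>T. \<Prod>k\<in>UNIV. e (int (\<alpha> k) - int (\<alpha>0 k)) ^ l k))"
    unfolding mpoly_eval_def sum_distrib_right sum_distrib_left
    by (subst sum.swap) (simp add: mult.assoc prod.distrib[symmetric] e_shift)
  also have "\<dots> = (\<Sum>\<alpha>\<in>A. g \<alpha> * (\<Prod>k\<in>UNIV. \<Sum>j<K. e (int (\<alpha> k) - int (\<alpha>0 k)) ^ j))"
    unfolding T_def by (subst prod_sum_PiE) auto
  also have "\<dots> = (\<Sum>\<alpha>\<in>A. if \<alpha> = \<alpha>0 then g \<alpha>0 * of_nat K ^ CARD('k) else 0)"
  proof (intro sum.cong refl)
    fix \<alpha> assume "\<alpha> \<in> A"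
    show "g \<alpha> * (\<Prod>k\<in>UNIV. \<Sum>j<K. e (int (\<alpha> k) - int (\<alpha>0 k)) ^ j)
        = (if \<alpha> = \<alpha>0 then g \<alpha>0 * of_nat K ^ CARD('k) else 0)"
    proof (cases "\<alpha> = \<alpha>0")
      case False
      then obtain k where "\<alpha> k \<noteq> \<alpha>0 k" by auto
      with False show ?thesis by (auto simp: root_sum[OF \<open>\<alpha> \<in> A\<close>] prod_zero_iff)
    qed (simp add: e_zero)
  qed
  also have "\<dots> = g \<alpha>0 * of_nat K ^ CARD('k)"
    using assms(1,3) by simp
  finally have average:
    "g \<alpha>0 * of_nat K ^ CARD('k) = (\<Sum>l\<in>T. mpoly_eval A g (\<lambda>k. e (int (l k))) * (\<Prod>k\<in>UNIV. e (- int (l k * \<alpha>0 k))))" ..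
  have "cmod (g \<alpha>0) * real K ^ CARD('k)
      = cmod (\<Sum>l\<in>T. mpoly_eval A g (\<lambda>k. e (int (l k))) * (\<Prod>k\<in>UNIV. e (- int (l k * \<alpha>0 k))))"
    by (simp only: average[symmetric] norm_mult norm_power norm_of_nat)
  also have "\<dots> \<le> (\<Sum>l\<in>T. cmod (mpoly_eval A g (\<lambda>k. e (int (l k))) * (\<Prod>k\<in>UNIV. e (- int (l k * \<alpha>0 k)))))"
    by (rule norm_sum)
  also have "\<dots> \<le> (\<Sum>l\<in>T. B)"
    by (intro sum_mono) (simp add: norm_mult prod_norm[symmetric] e_norm bound)
  also have "\<dots> = B * real K ^ CARD('k)"
    by (simp add: T_def card_PiE)
  finally show ?thesis by (simp add: K_def)
qed

lemma prod_scaled_power: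
  fixes x :: "'k::finite \<Rightarrow> 'a::comm_semiring_1"
  shows "(\<Prod>k\<in>UNIV. (s * x k) ^ \<alpha> k) = s ^ sum \<alpha> UNIV * (\<Prod>k\<in>UNIV. x k ^ \<alpha> k)"
  by (simp add: power_mult_distrib prod.distrib power_sum)

lemma mpoly_eval_homogenize:
  fixes g :: "('k::finite \<Rightarrow> nat) \<Rightarrow> 'a::comm_semiring_1"
  assumes "\<forall>\<alpha>\<in>A. sum \<alpha> UNIV \<le> d"
  shows "(\<Sum>\<alpha>\<in>A. g \<alpha> * s ^ (d - sum \<alpha> UNIV) * (\<Prod>k\<in>UNIV. (s * x k) ^ \<alpha> k)) = s ^ d * mpoly_eval A g x"
  unfolding mpoly_eval_def sum_distrib_left prod_scaled_power
proof (rule sum.cong[OF refl])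
  fix \<alpha> assume "\<alpha> \<in> A"
  then have "s ^ (d - sum \<alpha> UNIV) * s ^ sum \<alpha> UNIV = s ^ d"
    using assms by (simp add: power_add[symmetric])
  moreover have "g \<alpha> * s ^ (d - sum \<alpha> UNIV) * (s ^ sum \<alpha> UNIV * (\<Prod>k\<in>UNIV. x k ^ \<alpha> k))
      = (s ^ (d - sum \<alpha> UNIV) * s ^ sum \<alpha> UNIV) * (g \<alpha> * (\<Prod>k\<in>UNIV. x k ^ \<alpha> k))"
    by (simp add: mult_ac)
  ultimately show "g \<alpha> * s ^ (d - sum \<alpha> UNIV) * (s ^ sum \<alpha> UNIV * (\<Prod>k\<in>UNIV. x k ^ \<alpha> k))
      = s ^ d * (g \<alpha> * (\<Prod>k\<in>UNIV. x k ^ \<alpha> k))"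
    by simp
qed

lemma maximum_modulus_distinguished_boundary:
  fixes F :: "('k::finite \<Rightarrow> complex) \<Rightarrow> complex"
  assumes "bounded S" and "closed S"
    and holo: "\<And>Z j. (\<lambda>\<zeta>. F (Z(j := \<zeta>))) holomorphic_on UNIV"
    and boundary: "\<And>Z. (\<forall>k. Z k \<in> frontier S) \<Longrightarrow> cmod (F Z) \<le> B"
    and "\<forall>k. Z k \<in> S"
  shows "cmod (F Z) \<le> B"
proof -
  have "(\<forall>k\<in>J. Z k \<in> S) \<Longrightarrow> (\<forall>k. k \<notin> J \<longrightarrow> Z k \<in> frontier S) \<Longrightarrow> cmod (F Z) \<le> B"
    if "finite J" for J
    using that
  proof (induction J arbitrary: Z rule: finite_induct)
    case empty
    then show ?case using boundary by auto
  next
    case (insert j J)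
    have "cmod (F (Z(j := Z j))) \<le> B"
    proof (rule maximum_modulus_frontier[of "\<lambda>\<zeta>. F (Z(j := \<zeta>))" S])
      show "(\<lambda>\<zeta>. F (Z(j := \<zeta>))) holomorphic_on interior S"
        using holo holomorphic_on_subset by blast
      show "continuous_on (closure S) (\<lambda>\<zeta>. F (Z(j := \<zeta>)))"
        using holo holomorphic_on_imp_continuous_on continuous_on_subset by blast
      show "cmod (F (Z(j := z))) \<le> B" if "z \<in> frontier S" for z
        using insert that by (intro insert.IH) auto
    qed (use assms insert.prems in auto)
    then show ?case by simp
  qed
  from this[of UNIV] show ?thesis using assms by simp
qed

definition bernstein_ellipse :: "real \<Rightarrow> complex set"
  where "bernstein_ellipse \<rho> = {z. cmod (z - 1) + cmod (z + 1) \<le> \<rho> + 1 / \<rho>}"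

lemma closed_bernstein_ellipse: "closed (bernstein_ellipse \<rho>)"
  unfolding bernstein_ellipse_def by (intro closed_Collect_le continuous_intros)

lemma bounded_bernstein_ellipse: "bounded (bernstein_ellipse \<rho>)"
proof -
  have "cmod z \<le> (\<rho> + 1 / \<rho>) / 2" if "z \<in> bernstein_ellipse \<rho>" for z
  proof -
    have "2 * cmod z \<le> cmod (z - 1) + cmod (z + 1)"
      using norm_triangle_ineq[of "z + 1" "z - 1"] by (simp add: norm_mult)
    also have "\<dots> \<le> \<rho> + 1 / \<rho>"
      using that by (simp add: bernstein_ellipse_def)
    finally show ?thesis by simp
  qed
  then show ?thesis unfolding bounded_iff by blast
qed

lemma frontier_bernstein_ellipse:
  assumes "z \<in> frontier (bernstein_ellipse \<rho>)"
  shows "cmod (z - 1) + cmod (z + 1) = \<rho> + 1 / \<rho>"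
proof -
  have "open {z. cmod (z - 1) + cmod (z + 1) < \<rho> + 1 / \<rho>}"
    by (intro open_Collect_less continuous_intros)
  then have "{z. cmod (z - 1) + cmod (z + 1) < \<rho> + 1 / \<rho>} \<subseteq> interior (bernstein_ellipse \<rho>)"
    by (intro interior_maximal) (auto simp: bernstein_ellipse_def)
  moreover have "z \<in> bernstein_ellipse \<rho>" "z \<notin> interior (bernstein_ellipse \<rho>)"
    using assms closed_bernstein_ellipse by (auto simp: frontier_def)
  ultimately show ?thesis
    unfolding bernstein_ellipse_def by force
qed

lemma norm_minus_one_sq_plus_norm_plus_one_sq: "cmod (w - 1) ^ 2 + cmod (w + 1) ^ 2 = 2 * cmod w ^ 2 + 2"
  unfolding cmod_power2 by (simp add: power2_eq_square algebra_simps)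

lemma cball_subset_bernstein_ellipse_3: "cball 0 1 \<subseteq> bernstein_ellipse 3"
proof
  fix z :: complex assume "z \<in> cball 0 1"
  define a where "a = cmod (z - 1)"
  define b where "b = cmod (z + 1)"
  have "cmod z ^ 2 \<le> 1" using \<open>z \<in> cball 0 1\<close> by (simp add: power_le_one)
  then have "a ^ 2 + b ^ 2 \<le> 4"
    using norm_minus_one_sq_plus_norm_plus_one_sq[of z] unfolding a_def b_def by linarith
  then have "(a + b) ^ 2 \<le> (10 / 3) ^ 2"
    using sum_squares_ge_zero[of "a - b" 0] by (simp add: power2_eq_square algebra_simps)
  then have "a + b \<le> 10 / 3"
    by (rule power2_le_imp_le) simp
  then show "z \<in> bernstein_ellipse 3"
    unfolding bernstein_ellipse_def a_def b_def by simp
qed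

lemma bernstein_ellipse_boundary_joukowski:
  assumes "\<rho> \<ge> 1" and "cmod (z - 1) + cmod (z + 1) = \<rho> + 1 / \<rho>"
  shows "\<exists>w. cmod w = \<rho> \<and> z = (w + inverse w) / 2"
proof -
  define s where "s = csqrt (z ^ 2 - 1)"
  have "s ^ 2 = z ^ 2 - 1"
    unfolding s_def by simp
  then have "(z + s) * (z - s) = 1"
    by (simp add: power2_eq_square algebra_simps)
  then have "z + s \<noteq> 0" and z_eq: "z = ((z + s) + inverse (z + s)) / 2"
    by (auto simp: inverse_unique)
  obtain w where zw: "z = (w + inverse w) / 2" and w1: "1 \<le> cmod w"
  proof (cases "1 \<le> cmod (z + s)")
    case True
    with z_eq that show ?thesis by blast
  next
    case False
    then have "1 \<le> cmod (inverse (z + s))"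
      using \<open>z + s \<noteq> 0\<close> by (simp add: norm_inverse one_le_inverse)
    moreover have "z = (inverse (z + s) + inverse (inverse (z + s))) / 2"
      using z_eq by (simp add: add.commute)
    ultimately show ?thesis using that by blast
  qed
  define t where "t = cmod w"
  have "w \<noteq> 0" and t1: "1 \<le> t" using w1 t_def by auto
  have "z - 1 = (w - 1) ^ 2 / (2 * w)" "z + 1 = (w + 1) ^ 2 / (2 * w)"
    using \<open>w \<noteq> 0\<close> unfolding zw by (simp_all add: field_simps power2_eq_square)
  then have "cmod (z - 1) + cmod (z + 1) = (cmod (w - 1) ^ 2 + cmod (w + 1) ^ 2) / (2 * t)"
    unfolding t_def by (simp add: norm_divide norm_mult norm_power add_divide_distrib)
  also have "\<dots> = (2 * t ^ 2 + 2) / (2 * t)"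
    unfolding norm_minus_one_sq_plus_norm_plus_one_sq t_def ..
  also have "\<dots> = t + 1 / t"
    using t1 by (simp add: field_simps power2_eq_square)
  finally have "t + 1 / t = \<rho> + 1 / \<rho>" using assms(2) by simp
  then have "(t - \<rho>) * (t * \<rho> - 1) = 0"
    using t1 assms(1) by (simp add: field_simps)
  moreover have "t = \<rho>" if "t * \<rho> = 1"
  proof -
    have "t \<le> t * \<rho>"
      using t1 assms(1) by (simp add: mult_le_cancel_left1)
    then have "t = 1" using that t1 by linarith
    then show ?thesis using that by simp
  qed
  ultimately have "t = \<rho>"
    by auto
  then show ?thesis using zw t_def by blast
qed

lemma cnj_eq_inverse_if_norm_1:
  assumes "cmod u = 1"
  shows "cnj u = inverse u"
proof -
  have "u * cnj u = 1"
    using complex_norm_square[of u] assms by simp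
  then show ?thesis
    by (simp add: inverse_unique)
qed

lemma mpoly_bound_on_bernstein_ellipse_boundary:
  fixes g :: "('k::finite \<Rightarrow> nat) \<Rightarrow> real"
  assumes "\<rho> \<ge> 1" and deg: "\<forall>\<alpha>\<in>A. sum \<alpha> UNIV \<le> d"
    and cube: "\<And>x. (\<forall>k. \<bar>x k\<bar> \<le> 1) \<Longrightarrow> \<bar>mpoly_eval A g x\<bar> \<le> M"
    and Z: "\<forall>k. cmod (Z k - 1) + cmod (Z k + 1) = \<rho> + 1 / \<rho>"
  shows "cmod (mpoly_eval A (\<lambda>\<alpha>. of_real (g \<alpha>)) Z) \<le> \<rho> ^ d * M"
proof -
  have "\<forall>k. \<exists>w. cmod w = \<rho> \<and> Z k = (w + inverse w) / 2"
    using bernstein_ellipse_boundary_joukowski[OF \<open>\<rho> \<ge> 1\<close>] Z by blast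
  then obtain w where w: "\<And>k. cmod (w k) = \<rho>" "\<And>k. Z k = (w k + inverse (w k)) / 2"
    by metis
  define b where "b k = w k / of_real \<rho>" for k
  have b: "cmod (b k) = 1" for k
    using w(1) \<open>\<rho> \<ge> 1\<close> by (simp add: b_def norm_divide)
  then have b0: "b k \<noteq> 0" for k
    by (metis norm_zero zero_neq_one)
  define y where "y v k = (b k + v ^ 2 / b k) / 2" for v k
  \<comment> \<open>\<open>G v = v\<^sup>d Q(y v / v)\<close> is entire; on the unit circle \<open>y v / v\<close> is real with entries in \<open>[-1, 1]\<close>,
    and \<open>y (1/\<rho>) = Z/\<rho>\<close>.\<close>
  define G where "G v = (\<Sum>\<alpha>\<in>A. of_real (g \<alpha>) * v ^ (d - sum \<alpha> UNIV) * (\<Prod>k\<in>UNIV. y v k ^ \<alpha> k))" for v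
  have G_holo: "G holomorphic_on UNIV"
    unfolding G_def y_def using b0 by (intro holomorphic_intros) auto
  have G_circle: "cmod (G v) \<le> M" if v: "cmod v = 1" for v
  proof -
    define x where "x k = Re (b k / v)" for k
    have "v \<noteq> 0" using v by auto
    have bv: "cmod (b k / v) = 1" for k
      using b v by (simp add: norm_divide)
    have "y v k = v * of_real (x k)" for k
    proof -
      have "of_real (x k) = (b k / v + cnj (b k / v)) / 2"
        unfolding x_def using complex_add_cnj[of "b k / v"] by simp
      also have "cnj (b k / v) = v / b k"
        using cnj_eq_inverse_if_norm_1[OF bv] by (simp add: inverse_eq_divide)
      finally show ?thesis
        unfolding y_def using \<open>v \<noteq> 0\<close> b0[of k] by (simp add: field_simps power2_eq_square)
    qed
    then have "G v = v ^ d * mpoly_eval A (\<lambda>\<alpha>. of_real (g \<alpha>)) (\<lambda>k. of_real (x k))"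
      unfolding G_def by (simp only: mpoly_eval_homogenize[OF deg])
    then have "cmod (G v) = \<bar>mpoly_eval A g x\<bar>"
      using v by (simp add: norm_mult norm_power mpoly_eval_of_real)
    also have "\<dots> \<le> M"
      using abs_Re_le_cmod bv unfolding x_def by (intro cube) metis
    finally show ?thesis .
  qed
  have "cmod (G (of_real (1 / \<rho>))) \<le> M"
  proof (rule maximum_modulus_frontier[of G "cball 0 1"])
    show "G holomorphic_on interior (cball 0 1)"
      using G_holo by (rule holomorphic_on_subset) simp
    show "continuous_on (closure (cball 0 1)) G"
      using G_holo holomorphic_on_imp_continuous_on continuous_on_subset by blast
    show "(of_real (1 / \<rho>) :: complex) \<in> cball 0 1"
      using \<open>\<rho> \<ge> 1\<close> by (simp add: dist_norm norm_divide)
  qed (use G_circle in auto)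
  moreover have "y (of_real (1 / \<rho>)) k = of_real (1 / \<rho>) * Z k" for k
  proof -
    have "w k \<noteq> 0" "complex_of_real \<rho> \<noteq> 0"
      using w(1)[of k] \<open>\<rho> \<ge> 1\<close> by auto
    then show ?thesis
      unfolding y_def b_def w(2) by (simp add: field_simps power2_eq_square)
  qed
  then have "G (of_real (1 / \<rho>)) = of_real (1 / \<rho>) ^ d * mpoly_eval A (\<lambda>\<alpha>. of_real (g \<alpha>)) Z"
    unfolding G_def by (simp only: mpoly_eval_homogenize[OF deg])
  then have "cmod (G (of_real (1 / \<rho>))) = cmod (mpoly_eval A (\<lambda>\<alpha>. of_real (g \<alpha>)) Z) / \<rho> ^ d"
    using \<open>\<rho> \<ge> 1\<close> by (simp add: norm_mult norm_power norm_divide power_one_over)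
  then have "cmod (mpoly_eval A (\<lambda>\<alpha>. of_real (g \<alpha>)) Z) = \<rho> ^ d * cmod (G (of_real (1 / \<rho>)))"
    using \<open>\<rho> \<ge> 1\<close> by simp
  ultimately show ?thesis
    using \<open>\<rho> \<ge> 1\<close> by (simp add: mult_left_mono)
qed

lemma mpoly_bound_on_bernstein_ellipse:
  fixes g :: "('k::finite \<Rightarrow> nat) \<Rightarrow> real"
  assumes "\<rho> \<ge> 1" and "\<forall>\<alpha>\<in>A. sum \<alpha> UNIV \<le> d"
    and "\<And>x. (\<forall>k. \<bar>x k\<bar> \<le> 1) \<Longrightarrow> \<bar>mpoly_eval A g x\<bar> \<le> M"
    and "\<forall>k. Z k \<in> bernstein_ellipse \<rho>"
  shows "cmod (mpoly_eval A (\<lambda>\<alpha>. of_real (g \<alpha>)) Z) \<le> \<rho> ^ d * M"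
proof (rule maximum_modulus_distinguished_boundary[OF bounded_bernstein_ellipse[of \<rho>] closed_bernstein_ellipse[of \<rho>]
      mpoly_eval_holomorphic_in_var])
  fix Z' :: "'k \<Rightarrow> complex"
  assume "\<forall>k. Z' k \<in> frontier (bernstein_ellipse \<rho>)"
  then have "\<forall>k. cmod (Z' k - 1) + cmod (Z' k + 1) = \<rho> + 1 / \<rho>"
    using frontier_bernstein_ellipse by blast
  then show "cmod (mpoly_eval A (\<lambda>\<alpha>. of_real (g \<alpha>)) Z') \<le> \<rho> ^ d * M"
    using mpoly_bound_on_bernstein_ellipse_boundary[OF assms(1-3)] by blast
qed (use assms(4) in simp)

lemma coeff_bound_of_mpoly_bounded_on_unit_cube:
  fixes g :: "('k::finite \<Rightarrow> nat) \<Rightarrow> real"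
  assumes "finite A" and deg: "\<forall>\<alpha>\<in>A. sum \<alpha> UNIV \<le> d" and "\<alpha>0 \<in> A"
    and cube: "\<And>x. (\<forall>k. \<bar>x k\<bar> \<le> 1) \<Longrightarrow> \<bar>mpoly_eval A g x\<bar> \<le> M"
  shows "\<bar>g \<alpha>0\<bar> \<le> 3 ^ d * M"
proof -
  have "\<forall>\<alpha>\<in>A. \<forall>k. \<alpha> k \<le> d"
  proof (intro ballI allI)
    fix \<alpha> k assume "\<alpha> \<in> A"
    have "\<alpha> k \<le> sum \<alpha> UNIV"
      by (rule member_le_sum) auto
    moreover have "sum \<alpha> UNIV \<le> d"
      using deg \<open>\<alpha> \<in> A\<close> by blast
    ultimately show "\<alpha> k \<le> d" by linarith
  qed
  moreover have "cmod (mpoly_eval A (\<lambda>\<alpha>. of_real (g \<alpha>)) Z) \<le> 3 ^ d * M"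
    if "\<forall>k. cmod (Z k) = 1" for Z
  proof (rule mpoly_bound_on_bernstein_ellipse[OF _ deg cube])
    show "\<forall>k. Z k \<in> bernstein_ellipse 3"
      using that cball_subset_bernstein_ellipse_3 by auto
  qed simp_all
  ultimately have "cmod (complex_of_real (g \<alpha>0)) \<le> 3 ^ d * M"
    by (rule coeff_le_sup_on_torus[OF \<open>finite A\<close> _ \<open>\<alpha>0 \<in> A\<close>])
  then show ?thesis
    by simp
qed

definition monomial_join :: "('n \<Rightarrow> nat) \<times> ('m \<Rightarrow> nat) \<Rightarrow> 'n + 'm \<Rightarrow> nat"
  where "monomial_join p = case_sum (fst p) (snd p)"

lemma inj_monomial_join: "inj monomial_join"
proof (rule injI)
  fix p q :: "('n \<Rightarrow> nat) \<times> ('m \<Rightarrow> nat)"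
  assume "monomial_join p = monomial_join q"
  then have "monomial_join p \<circ> Inl = monomial_join q \<circ> Inl" "monomial_join p \<circ> Inr = monomial_join q \<circ> Inr"
    by auto
  then show "p = q"
    unfolding monomial_join_def by (simp add: prod_eq_iff case_sum_o_inj)
qed

lemma sum_UNIV_Plus: "sum h (UNIV :: ('a::finite + 'b::finite) set) = sum (h \<circ> Inl) UNIV + sum (h \<circ> Inr) UNIV"
  by (subst UNIV_Plus_UNIV[symmetric]) (rule sum.Plus; simp)

lemma prod_UNIV_Plus: "prod h (UNIV :: ('a::finite + 'b::finite) set) = prod (h \<circ> Inl) UNIV * prod (h \<circ> Inr) UNIV"
  by (subst UNIV_Plus_UNIV[symmetric]) (rule prod.Plus; simp)

lemma sum_monomial_join: "sum (monomial_join (a, b)) UNIV = mdeg a + mdeg b"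
  unfolding monomial_join_def mdeg_def sum_UNIV_Plus by (simp add: case_sum_o_inj)

lemma peval_scaled_eq_mpoly_eval:
  "peval d c (\<chi> i. t * y (Inl i)) (\<chi> j. t * y (Inr j))
     = mpoly_eval (monomial_join ` monomials_upto d) (\<lambda>\<alpha>. c (\<alpha> \<circ> Inl, \<alpha> \<circ> Inr) * t ^ sum \<alpha> UNIV) y"
  unfolding mpoly_eval_def sum.reindex[OF inj_on_subset[OF inj_monomial_join subset_UNIV]] peval_def
proof (intro sum.cong refl, clarsimp)
  fix a b
  have "(\<Prod>k\<in>UNIV. y k ^ monomial_join (a, b) k)
      = (\<Prod>i\<in>UNIV. y (Inl i) ^ a i) * (\<Prod>j\<in>UNIV. y (Inr j) ^ b j)"
    unfolding prod_UNIV_Plus by (simp add: monomial_join_def)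
  moreover have "c (monomial_join (a, b) \<circ> Inl, monomial_join (a, b) \<circ> Inr) = c (a, b)"
    by (simp add: monomial_join_def case_sum_o_inj)
  ultimately show "c (a, b) * (\<Prod>i\<in>UNIV. (t * y (Inl i)) ^ a i) * (\<Prod>j\<in>UNIV. (t * y (Inr j)) ^ b j)
      = c (monomial_join (a, b) \<circ> Inl, monomial_join (a, b) \<circ> Inr) * t ^ sum (monomial_join (a, b)) UNIV
        * (\<Prod>k\<in>UNIV. y k ^ monomial_join (a, b) k)"
    using prod_scaled_power[of t "\<lambda>i. y (Inl i)" a] prod_scaled_power[of t "\<lambda>j. y (Inr j)" b]
    by (simp add: sum_monomial_join power_add mdeg_def)
qed

lemma finite_monomials_upto: "finite (monomials_upto d :: (('n::finite \<Rightarrow> nat) \<times> ('m::finite \<Rightarrow> nat)) set)"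
proof (rule finite_subset)
  have "a i \<le> d \<and> b j \<le> d" if "mdeg a + mdeg b \<le> d" for a :: "'n \<Rightarrow> nat" and b :: "'m \<Rightarrow> nat" and i j
  proof -
    have "a i \<le> mdeg a" "b j \<le> mdeg b"
      unfolding mdeg_def by (simp_all add: member_le_sum)
    then show ?thesis using that by linarith
  qed
  then show "monomials_upto d \<subseteq> (PiE UNIV (\<lambda>_. {..d}) \<times> PiE UNIV (\<lambda>_. {..d}) :: (('n \<Rightarrow> nat) \<times> ('m \<Rightarrow> nat)) set)"
    unfolding monomials_upto_def by (auto simp: PiE_iff)
qed (intro finite_cartesian_product finite_PiE; simp)

lemma fact_mult_le_fact_add: "fact m * fact n \<le> (fact (m + n) :: nat)"
proof -
  have "fact m * fact n * 1 \<le> fact m * fact n * ((m + n) choose m)"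
    by (intro mult_le_mono2) (simp add: Suc_leI)
  also have "\<dots> = fact (m + n)"
    using binomial_fact_lemma[of m "m + n"] by (simp add: ac_simps)
  finally show ?thesis by simp
qed

lemma prod_fact_le_fact_sum: "finite I \<Longrightarrow> (\<Prod>i\<in>I. fact (f i)) \<le> (fact (sum f I) :: nat)"
proof (induction I rule: finite_induct)
  case (insert x I)
  then have "(\<Prod>i\<in>insert x I. fact (f i)) \<le> fact (f x) * (fact (sum f I) :: nat)"
    by simp
  also have "\<dots> \<le> fact (f x + sum f I)"
    by (rule fact_mult_le_fact_add)
  finally show ?case using insert by simp
qed simp

lemma multinom_ge_1: "multinom a b \<ge> 1"
proof -
  have "(\<Prod>i\<in>UNIV. fact (a i)) * (\<Prod>j\<in>UNIV. fact (b j)) \<le> (fact (mdeg a) * fact (mdeg b) :: nat)"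
    unfolding mdeg_def by (intro mult_le_mono prod_fact_le_fact_sum) simp_all
  also have "\<dots> \<le> fact (mdeg a + mdeg b)"
    by (rule fact_mult_le_fact_add)
  finally have "real ((\<Prod>i\<in>UNIV. fact (a i)) * (\<Prod>j\<in>UNIV. fact (b j))) \<le> real (fact (mdeg a + mdeg b))"
    by (simp only: of_nat_le_iff)
  then have "(\<Prod>i\<in>UNIV. fact (a i)) * (\<Prod>j\<in>UNIV. fact (b j)) \<le> (fact (mdeg a + mdeg b) :: real)"
    by (simp add: of_nat_fact)
  moreover have "(0::real) < (\<Prod>i\<in>UNIV. fact (a i)) * (\<Prod>j\<in>UNIV. fact (b j))"
    by (intro mult_pos_pos prod_pos) auto
  ultimately show ?thesis
    unfolding multinom_def by simp
qed

lemma coeff_norm_le: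
  assumes "\<And>p. p \<in> monomials_upto d \<Longrightarrow> \<bar>c p\<bar> \<le> K"
  shows "coeff_norm d c \<le> K"
proof -
  have "((\<lambda>_. 0), (\<lambda>_. 0)) \<in> monomials_upto d"
    by (simp add: monomials_upto_def mdeg_def)
  moreover have "\<bar>c (a, b)\<bar> / multinom a b \<le> K" if "(a, b) \<in> monomials_upto d" for a b
  proof -
    have "\<bar>c (a, b)\<bar> / multinom a b \<le> \<bar>c (a, b)\<bar> / 1"
      using multinom_ge_1[of a b] by (intro divide_left_mono) auto
    then show ?thesis
      using assms[OF that] by simp
  qed
  ultimately show ?thesis
    unfolding coeff_norm_def using finite_monomials_upto by (subst Max_le_iff) auto
qed

definition centered_cube :: "real \<Rightarrow> (real ^ 'n::finite) set"
  where "centered_cube t = {x. \<forall>i. \<bar>x $ i\<bar> \<le> t}"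

lemma centered_cube_mono: "s \<le> t \<Longrightarrow> centered_cube s \<subseteq> centered_cube t"
  unfolding centered_cube_def by (auto intro: order_trans)

lemma centered_cube_subset_if_zero_in_interior:
  fixes X :: "(real ^ 'n::finite) set"
  assumes "0 \<in> interior X"
  obtains t where "0 < t" and "centered_cube t \<subseteq> X"
proof -
  obtain e where "0 < e" and e: "ball 0 e \<subseteq> X"
    using assms mem_interior by blast
  define t where "t = e / (2 * CARD('n))"
  have "0 < t"
    using \<open>0 < e\<close> by (simp add: t_def)
  moreover have "norm x < e" if "x \<in> centered_cube t" for x :: "real ^ 'n"
  proof -
    have "norm x \<le> (\<Sum>i\<in>UNIV. \<bar>x $ i\<bar>)"
      by (rule norm_le_l1_cart)
    also have "\<dots> \<le> CARD('n) * t"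
      using that sum_bounded_above[of UNIV "\<lambda>i. \<bar>x $ i\<bar>" t] by (simp add: centered_cube_def)
    also have "\<dots> < e"
      using \<open>0 < e\<close> by (simp add: t_def)
    finally show ?thesis .
  qed
  then have "centered_cube t \<subseteq> X"
    using e by (auto simp: dist_norm)
  ultimately show ?thesis using that by blast
qed

lemma cube_radius_eq_Sup:
  "cube_radius X U = Sup {s. 0 < s \<and> centered_cube s \<times> centered_cube s \<subseteq> X \<times> U}"
  by (simp add: cube_radius_def centered_cube_def)

lemma cube_radius_bounds:
  fixes X :: "(real ^ 'n::finite) set" and U :: "(real ^ 'm::finite) set"
  assumes "0 \<in> interior X" and "0 \<in> interior U" and "\<forall>x\<in>X. \<forall>i. \<bar>x $ i\<bar> \<le> 1"
  shows "0 < cube_radius X U" and "cube_radius X U \<le> 1"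
    and "\<And>t. 0 < t \<Longrightarrow> t < cube_radius X U \<Longrightarrow> centered_cube t \<times> centered_cube t \<subseteq> X \<times> U"
proof -
  define S where "S = {s. 0 < s \<and> centered_cube s \<times> centered_cube s \<subseteq> X \<times> U}"
  obtain tX tU where "0 < tX" "centered_cube tX \<subseteq> X" "0 < tU" "centered_cube tU \<subseteq> U"
    using centered_cube_subset_if_zero_in_interior assms(1,2) by metis
  then have "centered_cube (min tX tU) \<subseteq> X" "centered_cube (min tX tU) \<subseteq> U"
    using centered_cube_mono[of "min tX tU" tX] centered_cube_mono[of "min tX tU" tU] by auto
  with \<open>0 < tX\<close> \<open>0 < tU\<close> have min_in_S: "min tX tU \<in> S"
    unfolding S_def by auto
  have S_le_1: "s \<le> 1" if "s \<in> S" for s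
  proof -
    have "((\<chi> i. s) :: real ^ 'n, (\<chi> j. s) :: real ^ 'm) \<in> centered_cube s \<times> centered_cube s"
      using that by (simp add: S_def centered_cube_def)
    then have "((\<chi> i. s) :: real ^ 'n) \<in> X"
      using that unfolding S_def by blast
    then have "\<bar>((\<chi> i. s) :: real ^ 'n) $ undefined\<bar> \<le> 1"
      using assms(3) by blast
    then show ?thesis by simp
  qed
  then have "bdd_above S" by (auto simp: bdd_above_def)
  show "0 < cube_radius X U"
    using cSup_upper[OF min_in_S \<open>bdd_above S\<close>] \<open>0 < tX\<close> \<open>0 < tU\<close>
    by (simp add: cube_radius_eq_Sup S_def[symmetric])
  show "cube_radius X U \<le> 1"
    using min_in_S S_le_1 by (auto simp: cube_radius_eq_Sup S_def[symmetric] intro!: cSup_least)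
  fix t assume "0 < t" "t < cube_radius X U"
  then obtain s where "s \<in> S" "t < s"
    using less_cSupD[of S t] min_in_S by (auto simp: cube_radius_eq_Sup S_def[symmetric])
  then have "centered_cube t \<times> centered_cube t \<subseteq> centered_cube s \<times> centered_cube s"
    by (intro Sigma_mono centered_cube_mono) auto
  with \<open>s \<in> S\<close> show "centered_cube t \<times> centered_cube t \<subseteq> X \<times> U"
    unfolding S_def by blast
qed

lemma coeff_bound_of_peval_bounded_on_cube:
  fixes c :: "('n::finite \<Rightarrow> nat) \<times> ('m::finite \<Rightarrow> nat) \<Rightarrow> real"
  assumes "0 < t" and "t \<le> 1" and "p \<in> monomials_upto d"
    and bound: "\<And>x u. x \<in> centered_cube t \<Longrightarrow> u \<in> centered_cube t \<Longrightarrow> \<bar>peval d c x u\<bar> \<le> M"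
  shows "\<bar>c p\<bar> * t ^ d \<le> 3 ^ d * M"
proof -
  obtain a b where p: "p = (a, b)" by fastforce
  define g where "g \<alpha> = c (\<alpha> \<circ> Inl, \<alpha> \<circ> Inr) * t ^ sum \<alpha> UNIV" for \<alpha>
  have g_bound: "\<bar>g (monomial_join (a, b))\<bar> \<le> 3 ^ d * M"
  proof (rule coeff_bound_of_mpoly_bounded_on_unit_cube)
    show "finite (monomial_join ` monomials_upto d)"
      by (intro finite_imageI finite_monomials_upto)
    show "\<forall>\<alpha>\<in>monomial_join ` monomials_upto d. sum \<alpha> UNIV \<le> d"
      by (auto simp: sum_monomial_join monomials_upto_def)
    show "monomial_join (a, b) \<in> monomial_join ` monomials_upto d"
      using assms(3) p by blast
    fix y :: "'n + 'm \<Rightarrow> real"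
    assume "\<forall>k. \<bar>y k\<bar> \<le> 1"
    then have "\<bar>t * y k\<bar> \<le> t" for k
      using \<open>0 < t\<close> by (simp add: abs_mult mult_left_le)
    then have "\<bar>peval d c (\<chi> i. t * y (Inl i)) (\<chi> j. t * y (Inr j))\<bar> \<le> M"
      by (intro bound) (simp_all add: centered_cube_def)
    then show "\<bar>mpoly_eval (monomial_join ` monomials_upto d) g y\<bar> \<le> M"
      unfolding g_def peval_scaled_eq_mpoly_eval .
  qed
  have "\<bar>c p\<bar> * t ^ d \<le> \<bar>c p\<bar> * t ^ (mdeg a + mdeg b)"
    using assms p by (intro mult_left_mono power_decreasing) (auto simp: monomials_upto_def)
  also have "\<dots> = \<bar>g (monomial_join (a, b))\<bar>"
    using \<open>0 < t\<close> unfolding g_def sum_monomial_join p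
    by (simp add: monomial_join_def case_sum_o_inj abs_mult)
  also have "\<dots> \<le> 3 ^ d * M"
    by (rule g_bound)
  finally show ?thesis .
qed

lemma mult_power_le_of_le_below:
  fixes a r K :: real
  assumes "0 < r" and "\<And>t. 0 < t \<Longrightarrow> t < r \<Longrightarrow> a * t ^ d \<le> K"
  shows "a * r ^ d \<le> K"
proof (rule tendsto_upperbound)
  show "((\<lambda>t. a * t ^ d) \<longlongrightarrow> a * r ^ d) (at_left r)"
    by (intro tendsto_intros)
  show "\<forall>\<^sub>F t in at_left r. a * t ^ d \<le> K"
    using eventually_at_left_real[OF \<open>0 < r\<close>] by eventually_elim (use assms(2) in auto)
qed simp

lemma coeff_bound_of_peval_bounded_below_radius:
  fixes c :: "('n::finite \<Rightarrow> nat) \<times> ('m::finite \<Rightarrow> nat) \<Rightarrow> real"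
  assumes "0 < \<rho>" and "\<rho> \<le> 1" and "p \<in> monomials_upto d"
    and bound: "\<And>t x u. 0 < t \<Longrightarrow> t < \<rho> \<Longrightarrow> x \<in> centered_cube t \<Longrightarrow> u \<in> centered_cube t
      \<Longrightarrow> \<bar>peval d c x u\<bar> \<le> M"
  shows "\<bar>c p\<bar> * \<rho> ^ d \<le> 3 ^ d * M"
proof (rule mult_power_le_of_le_below[OF \<open>0 < \<rho>\<close>])
  fix t assume "0 < t" "t < \<rho>"
  with \<open>\<rho> \<le> 1\<close> bound show "\<bar>c p\<bar> * t ^ d \<le> 3 ^ d * M"
    by (intro coeff_bound_of_peval_bounded_on_cube[OF _ _ \<open>p \<in> monomials_upto d\<close>]) auto
qed

lemma peval_le_sup_norm:
  assumes "compact S" and "(x, u) \<in> S"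
  shows "\<bar>peval d c x u\<bar> \<le> sup_norm d c S"
proof -
  have "continuous_on S (\<lambda>z. \<bar>peval d c (fst z) (snd z)\<bar>)"
    unfolding peval_def case_prod_beta by (intro continuous_intros)
  then have "bounded ((\<lambda>z. \<bar>peval d c (fst z) (snd z)\<bar>) ` S)"
    using \<open>compact S\<close> by (intro compact_imp_bounded compact_continuous_image)
  then show ?thesis
    unfolding sup_norm_def using cSUP_upper[OF \<open>(x, u) \<in> S\<close> bounded_imp_bdd_above] by fastforce
qed

theorem corollary1:
  fixes X :: "(real^'n::finite) set" and U :: "(real^'m::finite) set"
    and d :: nat and c :: "('n \<Rightarrow> nat) \<times> ('m \<Rightarrow> nat) \<Rightarrow> real" and r :: real
  assumes "compact X" and "compact U"
    and "\<forall>x\<in>X. \<forall>i. \<bar>x $ i\<bar> \<le> 1" and "\<forall>u\<in>U. \<forall>j. \<bar>u $ j\<bar> \<le> 1"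
    and "0 \<in> interior X" and "0 \<in> interior U"
    and "r = 1 / cube_radius X U"
  shows "coeff_norm d c \<le> 3 ^ (d + 1) * r ^ d * sup_norm d c (X \<times> U)"
proof -
  define \<rho> where "\<rho> = cube_radius X U"
  define M where "M = sup_norm d c (X \<times> U)"
  have "0 < \<rho>" "\<rho> \<le> 1"
    and cubes: "\<And>t. 0 < t \<Longrightarrow> t < \<rho> \<Longrightarrow> centered_cube t \<times> centered_cube t \<subseteq> X \<times> U"
    unfolding \<rho>_def using cube_radius_bounds[OF assms(5,6,3)] by auto
  have M: "\<bar>peval d c x u\<bar> \<le> M" if "(x, u) \<in> X \<times> U" for x u
    unfolding M_def using compact_Times[OF assms(1,2)] that by (rule peval_le_sup_norm)
  have "(0, 0) \<in> X \<times> U"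
    using assms(5,6) interior_subset[of X] interior_subset[of U] by auto
  then have "0 \<le> M"
    using M by force
  have "\<bar>c p\<bar> \<le> 3 ^ d * r ^ d * M" if "p \<in> monomials_upto d" for p
  proof -
    have "\<bar>peval d c x u\<bar> \<le> M" if "0 < t" "t < \<rho>" "x \<in> centered_cube t" "u \<in> centered_cube t" for t x u
      using cubes[of t] M[of x u] that by blast
    then have "\<bar>c p\<bar> * \<rho> ^ d \<le> 3 ^ d * M"
      by (rule coeff_bound_of_peval_bounded_below_radius[OF \<open>0 < \<rho>\<close> \<open>\<rho> \<le> 1\<close> that])
    then show ?thesis
      using \<open>0 < \<rho>\<close> by (simp add: assms(7) \<rho>_def[symmetric] power_one_over pos_le_divide_eq mult_ac)
  qed
  then have "coeff_norm d c \<le> 3 ^ d * r ^ d * M"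
    by (rule coeff_norm_le)
  also have "\<dots> \<le> 3 ^ (d + 1) * r ^ d * M"
    using \<open>0 \<le> M\<close> \<open>0 < \<rho>\<close> by (simp add: assms(7) \<rho>_def[symmetric] mult_right_mono)
  finally show ?thesis
    unfolding M_def .
qed

end
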